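(* Let $r\geqslant 3$ be an odd integer and let $\Gamma\cong\mathbb{Z}_{2r}\oplus\mathbb{Z}_2\oplus\mathbb{Z}_4$. Then there exists an $\mathrm{MRS}_\Gamma(r,8;2)$ in which every row sum and every column sum equals $0_\Gamma$.
   Context: For an abelian group $\Gamma$ of order $abc$, an $\mathrm{MRS}_\Gamma(a,b;c)$ is a collection of $c$ arrays of size $a\times b$ whose entries are the elements of $\Gamma$, each appearing exactly once and in a unique array, such that there are $\omega,\delta\in\Gamma$ with every row sum (in every array) equal to $\omega$ and every column sum (in every array) equal to $\delta$. *)

theory Defs
  imports "HOL-Algebra.Elementary_Groups" "HOL-Algebra.FiniteProduct"
begin

text \<open>The group operation of G
  (written multiplicatively in HOL-Algebra) plays the role of the addition of the abelian group.\<close>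
definition MRS :: "('g, 'm) monoid_scheme \<Rightarrow> nat \<Rightarrow> nat \<Rightarrow> nat
    \<Rightarrow> (nat \<Rightarrow> nat \<Rightarrow> nat \<Rightarrow> 'g) \<Rightarrow> 'g \<Rightarrow> 'g \<Rightarrow> bool" where
  "MRS G a b c A \<omega> \<delta> \<longleftrightarrow>
     bij_betw (\<lambda>(k, i, j). A k i j) ({..<c} \<times> {..<a} \<times> {..<b}) (carrier G) \<and>
     \<omega> \<in> carrier G \<and> \<delta> \<in> carrier G \<and>
     (\<forall>k<c. \<forall>i<a. finprod G (\<lambda>j. A k i j) {..<b} = \<omega>) \<and>
     (\<forall>k<c. \<forall>j<b. finprod G (\<lambda>i. A k i j) {..<a} = \<delta>)"

end

(* Since r is odd, Z_2r is Z_r x Z_2, so the group is Z_r x H with H = Z_2 x Z_2 x Z_4 of order 16.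
   In each of the two r x 8 arrays, cell (i, j) gets Z_r-coordinate i in the left half (j < 4)
   and -i in the right half.  The 16 cells with Z_r-coordinate c are therefore the left halves of
   row c and the right halves of row -c in both arrays; they receive the 16 elements of H in the
   order of the sequence seq r c (cell (k, i, j) at position 8k + j).  The Z_r-coordinates of a row
   sum to 4i - 4i = 0, those of a column to +-r(r-1)/2, which is 0 mod r because r is odd.
   The sequence seq r c is seqZ, seqP, seqQ for c = 0, 1, r - 1 and seqL or seqN for the other
   even or odd c.  As r is odd, c -> -c pairs seqZ with seqZ, seqP with seqQ and seqL with seqN,
   and each such pair has vanishing half-row sums; the columns vanish because
   seqZ + seqP + seqQ and seqL + seqN vanish termwise. *)
theory Submission
  imports Defs "HOL-Library.Product_Plus"
begin

lemma hom_finprod: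
  assumes "comm_group G" "comm_group H" "h \<in> hom G H" "f \<in> A \<rightarrow> carrier G"
  shows "h (finprod G f A) = finprod H (\<lambda>x. h (f x)) A"
proof -
  interpret G: comm_group G by fact
  interpret H: comm_group H by fact
  have h_one: "h \<one>\<^bsub>G\<^esub> = \<one>\<^bsub>H\<^esub>"
    using assms(3) G.group_axioms H.group_axioms by (rule hom_one)
  show ?thesis
  proof (cases "finite A")
    case True
    from this assms(4) show ?thesis
    proof (induction A rule: finite_induct)
      case (insert x A)
      then have "h (f x) \<in> carrier H" "(\<lambda>x. h (f x)) \<in> A \<rightarrow> carrier H"
        using assms(3) by (auto simp: hom_def Pi_def)
      with insert assms(3) show ?case
        by (simp add: hom_mult)
    qed (simp add: h_one)
  qed (simp add: h_one)
qed

lemma MRS_iso: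
  assumes "comm_group H" "comm_group G" "h \<in> iso H G" and "MRS H a b c A \<omega> \<delta>"
  shows "MRS G a b c (\<lambda>k i j. h (A k i j)) (h \<omega>) (h \<delta>)"
proof -
  have hom: "h \<in> hom H G" and bij: "bij_betw h (carrier H) (carrier G)"
    using assms(3) by (auto simp: iso_def)
  let ?D = "{..<c} \<times> {..<a} \<times> {..<b}"
  have A_bij: "bij_betw (\<lambda>(k, i, j). A k i j) ?D (carrier H)"
    using assms(4) by (simp add: MRS_def)
  then have A_in: "A k i j \<in> carrier H" if "k < c" "i < a" "j < b" for k i j
    using bij_betw_apply[OF A_bij, of "(k, i, j)"] that by auto
  have "bij_betw (h \<circ> (\<lambda>(k, i, j). A k i j)) ?D (carrier G)"
    using A_bij bij by (rule bij_betw_trans)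
  moreover have "h \<circ> (\<lambda>(k, i, j). A k i j) = (\<lambda>(k, i, j). h (A k i j))"
    by auto
  moreover have "h (finprod H (\<lambda>j. A k i j) {..<b}) = finprod G (\<lambda>j. h (A k i j)) {..<b}"
    if "k < c" "i < a" for k i
    using hom_finprod[OF assms(1,2) hom, of "\<lambda>j. A k i j" "{..<b}"] A_in that by simp
  moreover have "h (finprod H (\<lambda>i. A k i j) {..<a}) = finprod G (\<lambda>i. h (A k i j)) {..<a}"
    if "k < c" "j < b" for k j
    using hom_finprod[OF assms(1,2) hom, of "\<lambda>i. A k i j" "{..<a}"] A_in that by simp
  ultimately show ?thesis
    using assms(4) hom by (auto simp: MRS_def hom_def)
qed

lemma comm_group_DirProd:
  assumes "comm_group G" "comm_group H"
  shows "comm_group (G \<times>\<times> H)"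
proof -
  interpret G: comm_group G by fact
  interpret H: comm_group H by fact
  show ?thesis
    by (rule group.group_comm_groupI) (auto simp: DirProd_group G.m_comm H.m_comm)
qed

lemma finprod_DirProd:
  assumes "comm_group G" "comm_group H" "f \<in> A \<rightarrow> carrier (G \<times>\<times> H)"
  shows "finprod (G \<times>\<times> H) f A = (finprod G (\<lambda>x. fst (f x)) A, finprod H (\<lambda>x. snd (f x)) A)"
proof -
  interpret G: comm_group G by fact
  interpret H: comm_group H by fact
  have "fst \<in> hom (G \<times>\<times> H) G" "snd \<in> hom (G \<times>\<times> H) H"
    by (auto simp: hom_def mult_DirProd')
  then show ?thesis
    using hom_finprod[OF comm_group_DirProd[OF assms(1,2)]] assms by (metis prod.collapse)
qed

lemma finprod_integer_mod_group:
  assumes "f \<in> A \<rightarrow> carrier (integer_mod_group n)"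
  shows "finprod (integer_mod_group n) f A = sum f A mod int n"
proof -
  interpret comm_group "integer_mod_group n" by simp
  show ?thesis
  proof (cases "finite A")
    case True
    from this assms show ?thesis
    proof (induction A rule: finite_induct)
      case (insert x A)
      then show ?case
        by (simp add: mod_add_right_eq)
    qed simp
  qed simp
qed

abbreviation Gamma :: "nat \<Rightarrow> (int \<times> int \<times> int) monoid" where
  "Gamma r \<equiv> integer_mod_group (2 * r) \<times>\<times> integer_mod_group 2 \<times>\<times> integer_mod_group 4"

lemma comm_group_Gamma: "comm_group (Gamma r)"
  by (intro comm_group_DirProd abelian_integer_mod_group)

definition Z224 :: "(int \<times> int \<times> int) set" where
  "Z224 = {0..<2} \<times> {0..<2} \<times> {0..<4}"

definition kernel_224 :: "(int \<times> int \<times> int) set" where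
  "kernel_224 = {h. even (fst h) \<and> even (fst (snd h)) \<and> 4 dvd snd (snd h)}"

lemma add_in_kernel_224: "x \<in> kernel_224 \<Longrightarrow> y \<in> kernel_224 \<Longrightarrow> x + y \<in> kernel_224"
  by (simp add: kernel_224_def)

text \<open>For odd \<open>r\<close> the first component is the element of \<open>Z_2r\<close> that is \<open>s\<close> mod \<open>r\<close> and
  \<open>fst h\<close> mod 2, because \<open>r + 1\<close> is 1 mod \<open>r\<close> and 0 mod 2.\<close>

definition Gamma_of :: "nat \<Rightarrow> int \<Rightarrow> int \<times> int \<times> int \<Rightarrow> int \<times> int \<times> int" where
  "Gamma_of r s h =
     ((s * (int r + 1) + fst h * int r) mod (2 * int r), fst (snd h) mod 2, snd (snd h) mod 4)"

lemma Gamma_of_in_carrier: "r > 0 \<Longrightarrow> Gamma_of r s h \<in> carrier (Gamma r)"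
  by (simp add: Gamma_of_def carrier_integer_mod_group)

lemma finprod_Gamma_of:
  assumes "r > 0"
  shows "finprod (Gamma r) (\<lambda>x. Gamma_of r (s x) (h x)) A = Gamma_of r (sum s A) (sum h A)"
proof -
  have "(\<lambda>x. Gamma_of r (s x) (h x)) \<in> A \<rightarrow> carrier (Gamma r)"
    using Gamma_of_in_carrier[OF assms] by blast
  then show ?thesis
    by (simp add: finprod_DirProd comm_group_DirProd finprod_integer_mod_group Gamma_of_def
        carrier_integer_mod_group Pi_def mod_sum_eq fst_sum snd_sum sum.distrib sum_distrib_right)
qed

lemma Gamma_of_eq_0:
  assumes "odd r" "int r dvd s" "h \<in> kernel_224"
  shows "Gamma_of r s h = (0, 0, 0)"
proof -
  have "even (int r + 1)"
    using assms(1) by simp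
  then obtain v where "int r + 1 = 2 * v" ..
  moreover obtain t where "s = int r * t"
    using assms(2) by blast
  moreover obtain u where "fst h = 2 * u"
    using assms(3) unfolding kernel_224_def by blast
  ultimately have "2 * int r dvd s * (int r + 1) + fst h * int r"
    by (simp add: algebra_simps)
  then show ?thesis
    using assms(3) by (simp add: Gamma_of_def kernel_224_def)
qed

lemma Gamma_of_inj:
  assumes "odd r" "h \<in> Z224" "h' \<in> Z224" "Gamma_of r s h = Gamma_of r s' h'"
  shows "s mod int r = s' mod int r \<and> h = h'"
proof -
  obtain e y z e' y' z' where h: "h = (e, y, z)" "h' = (e', y', z')"
    by (cases h, cases h')
  define D where "D = (s - s') * (int r + 1) + (e - e') * int r"
  have "2 * int r dvd D"
    using assms(4) unfolding D_def h Gamma_of_def by (simp add: mod_eq_dvd_iff algebra_simps)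
  then have "int r dvd D" "even D"
    using dvd_mult_left dvd_mult_right by blast+
  have "D = int r * (s - s' + e - e') + (s - s')"
    unfolding D_def by (simp add: algebra_simps)
  with \<open>int r dvd D\<close> have "int r dvd s - s'"
    by (simp add: dvd_add_right_iff)
  have "even ((e - e') * int r)"
    using \<open>even D\<close> assms(1) unfolding D_def by simp
  then have "even (e - e')"
    using assms(1) by simp
  then have "e = e'"
    using assms(2,3) unfolding h Z224_def by simp presburger
  with \<open>int r dvd s - s'\<close> show ?thesis
    using assms(2-4) unfolding h Gamma_of_def Z224_def by (auto simp: mod_eq_dvd_iff)
qed

definition seqZ :: "(int \<times> int \<times> int) list" where
  "seqZ = [(0,0,0), (0,0,2), (0,1,0), (0,1,2), (1,0,0), (1,0,2), (1,1,0), (1,1,2),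
           (0,0,1), (0,0,3), (0,1,1), (0,1,3), (1,0,1), (1,0,3), (1,1,1), (1,1,3)]"

definition seqP :: "(int \<times> int \<times> int) list" where
  "seqP = [(1,0,1), (1,1,0), (0,1,3), (1,1,1), (0,1,0), (0,0,2), (1,0,0), (0,0,3),
           (0,0,0), (1,0,3), (0,0,1), (0,1,1), (0,1,2), (1,1,2), (1,0,2), (1,1,3)]"

definition seqQ :: "(int \<times> int \<times> int) list" where
  "seqQ = [(1,0,3), (1,1,2), (0,0,1), (1,0,1), (1,1,0), (1,0,0), (0,1,0), (1,1,3),
           (0,0,3), (1,0,2), (0,1,2), (0,0,0), (1,1,1), (0,1,3), (0,1,1), (0,0,2)]"

definition seqL :: "(int \<times> int \<times> int) list" where
  "seqL = [(1,1,0), (0,1,1), (1,0,0), (0,1,2), (1,1,2), (0,1,0), (1,1,1), (0,0,0),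
           (1,1,3), (0,1,3), (0,0,2), (1,0,3), (0,0,1), (0,0,3), (1,0,2), (1,0,1)]"

definition seqN :: "(int \<times> int \<times> int) list" where
  "seqN = [(1,1,0), (0,1,3), (1,0,0), (0,1,2), (1,1,2), (0,1,0), (1,1,3), (0,0,0),
           (1,1,1), (0,1,1), (0,0,2), (1,0,1), (0,0,3), (0,0,1), (1,0,2), (1,0,3)]"

lemmas seq_defs = seqZ_def seqP_def seqQ_def seqL_def seqN_def

definition seq :: "nat \<Rightarrow> nat \<Rightarrow> (int \<times> int \<times> int) list" where
  "seq r c = (if c = 0 then seqZ else if c = 1 then seqP else if c = r - 1 then seqQ
              else if even c then seqL else seqN)"

lemma seq_enumerates_Z224: "distinct (seq r c) \<and> length (seq r c) = 16 \<and> set (seq r c) \<subseteq> Z224"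
  by (simp add: seq_def seq_defs Z224_def)

definition row_partners :: "((int \<times> int \<times> int) list \<times> (int \<times> int \<times> int) list) set" where
  "row_partners = {(seqZ, seqZ), (seqP, seqQ), (seqQ, seqP), (seqL, seqN), (seqN, seqL)}"

lemma seq_neg_in_row_partners:
  assumes "odd r" "r \<ge> 3" "c < r"
  shows "(seq r c, seq r ((r - c) mod r)) \<in> row_partners"
proof -
  consider "c = 0" | "c = 1" | "c = r - 1" | "2 \<le> c \<and> c < r - 1"
    using assms by linarith
  then show ?thesis
  proof cases
    case 4
    then have "(r - c) mod r = r - c" "even (r - c) \<longleftrightarrow> odd c"
      using assms by auto
    with 4 show ?thesis
      by (auto simp: seq_def row_partners_def)
  qed (use assms in \<open>auto simp: seq_def row_partners_def\<close>)
qed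

lemma row_partners_vanish:
  assumes "(U, V) \<in> row_partners" "k < 2"
  shows "(\<Sum>j<8. (if j < 4 then U else V) ! (8 * k + j)) \<in> kernel_224"
proof -
  have "k = 0 \<or> k = 1"
    using assms(2) by auto
  with assms(1) show ?thesis
    unfolding row_partners_def
    by (elim disjE insertE emptyE; simp add: seq_defs kernel_224_def numeral_eq_Suc lessThan_Suc)
qed

lemma column_triples_vanish:
  "\<forall>p\<in>{..<16}. seqZ ! p + seqP ! p + seqQ ! p \<in> kernel_224 \<and> seqL ! p + seqN ! p \<in> kernel_224"
  by (simp add: numeral_eq_Suc lessThan_Suc seq_defs kernel_224_def)

lemma sum_seq_in_kernel_224:
  assumes "odd r" "r \<ge> 3" "p < 16"
  shows "(\<Sum>c<r. seq r c ! p) \<in> kernel_224"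
proof -
  have "r = 2 * ((r - 3) div 2) + 3"
    using assms(1,2) by presburger
  then obtain m where r: "r = 2 * m + 3" ..
  have ZPQ: "seqZ ! p + seqP ! p + seqQ ! p \<in> kernel_224"
    and LN: "seqL ! p + seqN ! p \<in> kernel_224"
    using column_triples_vanish assms(3) by auto
  have partial_sums: "(\<Sum>c<2 + 2 * n. seq r c ! p) + seqQ ! p \<in> kernel_224" if "n \<le> m" for n
    using that
  proof (induction n)
    case 0
    have "seq r 0 = seqZ" "seq r 1 = seqP"
      by (simp_all add: seq_def)
    then show ?case
      using ZPQ by (simp add: numeral_2_eq_2)
  next
    case (Suc n)
    have IH: "(\<Sum>c<2 + 2 * n. seq r c ! p) + seqQ ! p \<in> kernel_224"
      using Suc by simp
    have "seq r (2 + 2 * n) = seqL" "seq r (3 + 2 * n) = seqN"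
      using Suc.prems by (auto simp: seq_def r)
    then have "(\<Sum>c<2 + 2 * Suc n. seq r c ! p) + seqQ ! p
        = ((\<Sum>c<2 + 2 * n. seq r c ! p) + seqQ ! p) + (seqL ! p + seqN ! p)"
      by (simp add: numeral_3_eq_3 algebra_simps)
    then show ?case
      using add_in_kernel_224[OF IH LN] by (simp only:)
  qed
  have "{..<r} = insert (2 + 2 * m) {..<2 + 2 * m}"
    by (auto simp: r)
  moreover have "seq r (2 + 2 * m) = seqQ"
    by (simp add: seq_def r)
  ultimately have "(\<Sum>c<r. seq r c ! p) = (\<Sum>c<2 + 2 * m. seq r c ! p) + seqQ ! p"
    by (simp add: add.commute)
  with partial_sums[OF order_refl] show ?thesis
    by (simp only:)
qed

definition row_coord :: "nat \<Rightarrow> nat \<Rightarrow> int" where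
  "row_coord i j = (if j < 4 then int i else - int i)"

definition residue :: "nat \<Rightarrow> nat \<Rightarrow> nat \<Rightarrow> nat" where
  "residue r i j = nat (row_coord i j mod int r)"

definition entry :: "nat \<Rightarrow> nat \<Rightarrow> nat \<Rightarrow> nat \<Rightarrow> int \<times> int \<times> int" where
  "entry r k i j = Gamma_of r (row_coord i j) (seq r (residue r i j) ! (8 * k + j))"

lemma residue_eq:
  assumes "i < r"
  shows "residue r i j = (if j < 4 then i else (r - i) mod r)"
proof (cases "j < 4 \<or> i = 0")
  case False
  then have "- int i mod int r = int (r - i)"
    using assms by (simp add: zmod_zminus1_eq_if of_nat_diff)
  with False assms show ?thesis
    by (simp add: residue_def row_coord_def)
qed (use assms in \<open>auto simp: residue_def row_coord_def\<close>)

lemma residue_less: "r > 0 \<Longrightarrow> residue r i j < r"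
  by (simp add: residue_def nat_less_iff)

lemma residue_inj:
  assumes "i < r" "i' < r" "residue r i j = residue r i' j"
  shows "i = i'"
proof -
  have "row_coord i j mod int r = row_coord i' j mod int r"
    using assms by (simp add: residue_def eq_nat_nat_iff)
  then have "int i mod int r = int i' mod int r"
    by (auto simp: row_coord_def mod_minus_eq split: if_splits
        dest: arg_cong[where f = "\<lambda>x. (- x) mod int r"])
  with assms(1,2) show ?thesis
    by simp
qed

lemma residue_bij:
  assumes "r > 0"
  shows "bij_betw (\<lambda>i. residue r i j) {..<r} {..<r}"
proof -
  have "inj_on (\<lambda>i. residue r i j) {..<r}"
    by (auto intro: inj_onI residue_inj)
  moreover have "(\<lambda>i. residue r i j) ` {..<r} \<subseteq> {..<r}"
    using residue_less[OF assms] by auto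
  ultimately show ?thesis
    by (simp add: bij_betw_def endo_inj_surj)
qed

lemma sum_row_coord_row: "(\<Sum>j<8. row_coord i j) = 0"
  by (simp add: row_coord_def numeral_eq_Suc lessThan_Suc)

lemma sum_row_coord_column:
  assumes "odd r"
  shows "int r dvd (\<Sum>i<r. row_coord i j)"
proof -
  have double_sum: "2 * (\<Sum>i<n. int i) = int n * (int n - 1)" for n
    by (induction n) (auto simp: algebra_simps)
  have "even (int r - 1)"
    using assms by simp
  then obtain m where "int r - 1 = 2 * m" ..
  with double_sum[of r] have "(\<Sum>i<r. int i) = int r * m"
    by simp
  then show ?thesis
    by (cases "j < 4") (simp_all add: row_coord_def sum_negf)
qed

lemma entry_row_sum:
  assumes "odd r" "r \<ge> 3" "k < 2" "i < r"
  shows "finprod (Gamma r) (\<lambda>j. entry r k i j) {..<8} = (0, 0, 0)"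
proof -
  obtain U V where UV: "seq r i = U" "seq r ((r - i) mod r) = V" "(U, V) \<in> row_partners"
    using seq_neg_in_row_partners[OF assms(1,2,4)] by blast
  have "(\<Sum>j<8. seq r (residue r i j) ! (8 * k + j)) = (\<Sum>j<8. (if j < 4 then U else V) ! (8 * k + j))"
    using assms(4) by (intro sum.cong) (auto simp: residue_eq UV)
  then have "(\<Sum>j<8. seq r (residue r i j) ! (8 * k + j)) \<in> kernel_224"
    using row_partners_vanish[OF UV(3) assms(3)] by simp
  then show ?thesis
    using assms by (simp add: entry_def finprod_Gamma_of sum_row_coord_row Gamma_of_eq_0)
qed

lemma entry_column_sum:
  assumes "odd r" "r \<ge> 3" "k < 2" "j < 8"
  shows "finprod (Gamma r) (\<lambda>i. entry r k i j) {..<r} = (0, 0, 0)"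
proof -
  have "(\<Sum>i<r. seq r (residue r i j) ! (8 * k + j)) = (\<Sum>c<r. seq r c ! (8 * k + j))"
    using assms(2) by (intro sum.reindex_bij_betw residue_bij) simp
  moreover have "(\<Sum>c<r. seq r c ! (8 * k + j)) \<in> kernel_224"
    using sum_seq_in_kernel_224 assms by simp
  ultimately show ?thesis
    using assms sum_row_coord_column by (simp add: entry_def finprod_Gamma_of Gamma_of_eq_0)
qed

lemma entry_inj:
  assumes "odd r" "k < 2" "i < r" "j < 8" "k' < 2" "i' < r" "j' < 8"
    and "entry r k i j = entry r k' i' j'"
  shows "k = k' \<and> i = i' \<and> j = j'"
proof -
  let ?c = "residue r i j" and ?c' = "residue r i' j'"
  have in_Z224: "seq r c ! p \<in> Z224" if "p < 16" for c p
    using seq_enumerates_Z224 that by (metis nth_mem subsetD)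
  have "seq r ?c ! (8 * k + j) \<in> Z224" "seq r ?c' ! (8 * k' + j') \<in> Z224"
    using assms(2,4,5,7) by (auto intro: in_Z224)
  with Gamma_of_inj[OF assms(1)] assms(8)
  have "row_coord i j mod int r = row_coord i' j' mod int r"
    and same_H: "seq r ?c ! (8 * k + j) = seq r ?c' ! (8 * k' + j')"
    unfolding entry_def by blast+
  then have "?c = ?c'"
    by (simp add: residue_def)
  with same_H have "8 * k + j = 8 * k' + j'"
    using seq_enumerates_Z224 assms(2,4,5,7) by (simp add: nth_eq_iff_index_eq)
  then have "k = k'" "j = j'"
    using assms(4,7) by presburger+
  with \<open>?c = ?c'\<close> show ?thesis
    using residue_inj assms(3,6) by blast
qed

lemma MRS_entry:
  assumes "odd r" "r \<ge> 3"
  shows "MRS (Gamma r) r 8 2 (entry r) (0, 0, 0) (0, 0, 0)"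
proof -
  let ?f = "\<lambda>(k, i, j). entry r k i j" and ?D = "{..<2} \<times> {..<r} \<times> {..<8}"
  have inj: "inj_on ?f ?D"
    using entry_inj[OF assms(1)] by (auto simp: inj_on_def)
  have "?f ` ?D \<subseteq> carrier (Gamma r)"
    using assms by (auto simp: entry_def Gamma_of_in_carrier simp del: carrier_DirProd)
  then have "?f ` ?D = carrier (Gamma r)"
    using assms by (intro card_subset_eq)
      (auto simp: card_image[OF inj] carrier_integer_mod_group card_cartesian_product)
  with inj have "bij_betw ?f ?D (carrier (Gamma r))"
    by (simp add: bij_betw_def)
  then show ?thesis
    using assms entry_row_sum entry_column_sum by (simp add: MRS_def)
qed

theorem lemma4p9:
  fixes G :: "('g, 'm) monoid_scheme" and r :: nat
  assumes "odd r" and "r \<ge> 3"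
    and "comm_group G"
    and "G \<cong> integer_mod_group (2 * r) \<times>\<times> integer_mod_group 2 \<times>\<times> integer_mod_group 4"
  shows "\<exists>A. MRS G r 8 2 A \<one>\<^bsub>G\<^esub> \<one>\<^bsub>G\<^esub>"
proof -
  interpret G: comm_group G by fact
  obtain \<phi> where "\<phi> \<in> iso G (Gamma r)"
    using assms(4) by (auto simp: is_iso_def)
  then have \<psi>: "inv_into (carrier G) \<phi> \<in> iso (Gamma r) G"
    by (rule G.iso_set_sym)
  then have "inv_into (carrier G) \<phi> (0, 0, 0) = \<one>\<^bsub>G\<^esub>"
    using hom_one[of _ "Gamma r" G] comm_group_Gamma G.group_axioms
    by (force simp: iso_def comm_group_def)
  with MRS_iso[OF comm_group_Gamma assms(3) \<psi> MRS_entry[OF assms(1,2)]] show ?thesis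
    by auto
qed

end
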